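(* Let $\alpha>0$ and $\beta\in\mathbb{R}$ satisfy one of: $\beta<\alpha<1$; or $\beta<1<\alpha$; or $\beta<\alpha=1$. Then the $\beta$-Ces\`aro operator $C_\beta$ is a compact linear operator from $(\mathcal{B}_\alpha^0,\|\cdot\|_{\mathcal{B}_\alpha})$ to itself.
   Context: $\mathbb{D}=\{z\in\mathbb{C}:|z|<1\}$. For $\alpha>0$, the $\alpha$-Bloch space $\mathcal{B}_\alpha$ is the space of analytic functions $f$ on $\mathbb{D}$ with $\|f\|_{\mathcal{B}_\alpha}:=\sup_{z\in\mathbb{D}}(1-|z|^2)^\alpha|f'(z)|<\infty$. $\mathcal{B}_\alpha^0=\{f\in\mathcal{B}_\alpha: f(0)=0\}$, normed by $\|\cdot\|_{\mathcal{B}_\alpha}$. For $\beta\in\mathbb{R}$, the $\beta$-Ces\`aro operator is $C_\beta(f)(z)=\int_0^z \frac{f(w)}{w(1-w)^\beta}\,dw$ for analytic $f$ on $\mathbb{D}$ with $f(0)=0$, where $(1-w)^{\beta}$ is defined by the principal branch. *)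

theory Defs
  imports "HOL-Complex_Analysis.Complex_Analysis"
begin

abbreviation unit_disc :: "complex set" where
  "unit_disc \<equiv> ball 0 1"

definition bloch_norm :: "real \<Rightarrow> (complex \<Rightarrow> complex) \<Rightarrow> real" where
  "bloch_norm \<alpha> f = (SUP z\<in>unit_disc. (1 - (cmod z)\<^sup>2) powr \<alpha> * cmod (deriv f z))"

definition bloch_space :: "real \<Rightarrow> (complex \<Rightarrow> complex) set" where
  "bloch_space \<alpha> = {f. f holomorphic_on unit_disc \<and>
      bdd_above ((\<lambda>z. (1 - (cmod z)\<^sup>2) powr \<alpha> * cmod (deriv f z)) ` unit_disc)}"

definition bloch0 :: "real \<Rightarrow> (complex \<Rightarrow> complex) set" where
  "bloch0 \<alpha> = {f \<in> bloch_space \<alpha>. f 0 = 0}"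

definition cesaro_op :: "real \<Rightarrow> (complex \<Rightarrow> complex) \<Rightarrow> complex \<Rightarrow> complex" where
  "cesaro_op \<beta> f z =
     contour_integral (linepath 0 z) (\<lambda>w. f w / (w * (1 - w) powr (complex_of_real \<beta>)))"

definition compact_bloch0_operator ::
  "real \<Rightarrow> ((complex \<Rightarrow> complex) \<Rightarrow> complex \<Rightarrow> complex) \<Rightarrow> bool" where
  "compact_bloch0_operator \<alpha> T \<longleftrightarrow>
     (\<forall>f\<in>bloch0 \<alpha>. T f \<in> bloch0 \<alpha>) \<and>
     (\<forall>f\<in>bloch0 \<alpha>. \<forall>g\<in>bloch0 \<alpha>. \<forall>a b::complex. \<forall>z\<in>unit_disc.
         T (\<lambda>w. a * f w + b * g w) z = a * T f z + b * T g z) \<and>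
     (\<forall>F::nat \<Rightarrow> complex \<Rightarrow> complex. (\<forall>n. F n \<in> bloch0 \<alpha>) \<and>
         bdd_above (range (\<lambda>n. bloch_norm \<alpha> (F n))) \<longrightarrow>
       (\<exists>r g. strict_mono r \<and> g \<in> bloch0 \<alpha> \<and>
          (\<lambda>n. bloch_norm \<alpha> (\<lambda>z. T (F (r n)) z - g z)) \<longlonglongrightarrow> 0))"

end

theory Submission
  imports Defs
begin

text \<open>
  The operator is analysed through its derivative \<open>(C\<^sub>\<beta> f)'(z) = f(z) / (z (1 - z)\<^bsup>\<beta>\<^esup>)\<close>.
  If \<open>(1 - |z|\<^sup>2)\<^bsup>\<alpha>\<^esup> |f'(z)| \<le> M\<close>, then \<open>|f'(z)| \<le> M (1 - |z|)\<^bsup>-\<delta>-1\<^esup>\<close> for every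
  \<open>\<delta> > 0\<close> with \<open>\<delta> \<ge> \<alpha> - 1\<close>, and integrating along the radius gives
  \<open>|f(z)| \<le> M (1 - |z|)\<^bsup>-\<delta>\<^esup> / \<delta>\<close>. As \<open>|1 - z| \<ge> 1 - |z|\<close>, the weighted derivative of
  \<open>C\<^sub>\<beta> f\<close> is then \<open>O(M (1 - |z|)\<^bsup>\<epsilon>\<^esup>)\<close> near the unit circle, with
  \<open>\<epsilon> = \<alpha> - \<delta> - max \<beta> 0\<close>; the hypotheses \<open>\<beta> < \<alpha>\<close> and \<open>\<beta> < 1\<close> are exactly what allows
  \<open>\<epsilon> > 0\<close>. So \<open>C\<^sub>\<beta>\<close> maps the space into itself.

  For compactness, Montel's theorem applied to the derivatives of a bounded sequence \<open>f\<^sub>n\<close>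
  gives a subsequence with \<open>f\<^sub>n' \<rightarrow> h'\<close> locally uniformly, for some \<open>h\<close> in the space. The
  weighted derivative of \<open>C\<^sub>\<beta> (f\<^sub>n - h)\<close> is then small uniformly in \<open>n\<close> near the circle, by
  the estimate above, and small on any smaller closed disc for large \<open>n\<close>, by the uniform
  convergence; hence \<open>C\<^sub>\<beta> f\<^sub>n \<rightarrow> C\<^sub>\<beta> h\<close> in norm.
\<close>

lemma norm_diff_le_of_vector_derivative_le:
  fixes g :: "real \<Rightarrow> 'a::real_inner"
  assumes "a \<le> b"
    and g: "\<And>t. a \<le> t \<Longrightarrow> t \<le> b \<Longrightarrow> (g has_vector_derivative g' t) (at t)"
    and h: "\<And>t. a \<le> t \<Longrightarrow> t \<le> b \<Longrightarrow> (h has_real_derivative h' t) (at t)"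
    and le: "\<And>t. a \<le> t \<Longrightarrow> t \<le> b \<Longrightarrow> norm (g' t) \<le> h' t"
  shows "norm (g b - g a) \<le> h b - h a"
proof -
  define d where "d = g b - g a"
  have "d \<bullet> g b - norm d * h b \<le> d \<bullet> g a - norm d * h a"
  proof (rule DERIV_nonpos_imp_nonincreasing[OF \<open>a \<le> b\<close>])
    fix t assume t: "a \<le> t" "t \<le> b"
    have "((\<lambda>t. d \<bullet> g t) has_real_derivative d \<bullet> g' t) (at t)"
      using has_derivative_inner_right[OF g[OF t, unfolded has_vector_derivative_def]]
      unfolding has_field_derivative_def by (simp add: mult_commute_abs)
    then have "((\<lambda>t. d \<bullet> g t - norm d * h t) has_real_derivative d \<bullet> g' t - norm d * h' t) (at t)"
      by (intro DERIV_diff DERIV_cmult h t)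
    moreover have "d \<bullet> g' t \<le> norm d * h' t"
      using norm_cauchy_schwarz[of d "g' t"] le[OF t] by (meson mult_left_mono norm_ge_zero order_trans)
    ultimately show "\<exists>y. ((\<lambda>t. d \<bullet> g t - norm d * h t) has_real_derivative y) (at t) \<and> y \<le> 0"
      by auto
  qed
  moreover have "d \<bullet> g b - d \<bullet> g a = norm d * norm d"
    unfolding inner_diff_right[symmetric] d_def by (simp add: power2_norm_eq_inner[symmetric] power2_eq_square)
  ultimately have "norm d * norm d \<le> norm d * (h b - h a)"
    by (simp add: algebra_simps)
  moreover have "h a \<le> h b"
    using DERIV_nonneg_imp_nondecreasing[OF \<open>a \<le> b\<close>, of h] h le
    by (meson norm_ge_zero order_trans)
  ultimately show ?thesis
    by (cases "d = 0") (simp_all add: d_def)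
qed

lemma growth_bound_of_deriv_growth:
  fixes f :: "complex \<Rightarrow> complex"
  assumes hol: "f holomorphic_on ball 0 1" and "\<delta> > 0" "M \<ge> 0"
    and bd: "\<And>w. w \<in> ball 0 1 \<Longrightarrow> cmod (deriv f w) \<le> M * (1 - cmod w) powr (-\<delta>-1)"
    and z: "z \<in> ball 0 1"
  shows "cmod (f z - f 0) \<le> M * (1 - cmod z) powr (-\<delta>) / \<delta>"
proof -
  have tz: "of_real t * z \<in> ball 0 1" "1 - t * cmod z > 0" if "0 \<le> t" "t \<le> 1" for t
    using that z mult_left_le_one_le[of "cmod z" t] by (auto simp: norm_mult)
  have "cmod (f (of_real 1 * z) - f (of_real 0 * z))
        \<le> M * (1 - 1 * cmod z) powr (-\<delta>) / \<delta> - M * (1 - 0 * cmod z) powr (-\<delta>) / \<delta>"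
  proof (rule norm_diff_le_of_vector_derivative_le[where g' = "\<lambda>t. deriv f (of_real t * z) * z"
        and h' = "\<lambda>t. M * cmod z * (1 - t * cmod z) powr (-\<delta>-1)"])
    fix t :: real assume t: "0 \<le> t" "t \<le> 1"
    have "(f has_field_derivative deriv f (of_real t * z)) (at (of_real t * z))"
      using hol tz(1)[OF t] by (auto intro: holomorphic_derivI)
    then have "((\<lambda>x. f (x * z)) has_field_derivative deriv f (of_real t * z) * z) (at (of_real t))"
      by (auto intro!: derivative_eq_intros DERIV_chain2[where f = f])
    then show "((\<lambda>t. f (of_real t * z)) has_vector_derivative deriv f (of_real t * z) * z) (at t)"
      by (rule has_vector_derivative_real_field)
    show "((\<lambda>t. M * (1 - t * cmod z) powr (-\<delta>) / \<delta>) has_real_derivative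
            M * cmod z * (1 - t * cmod z) powr (-\<delta>-1)) (at t)"
      using tz(2)[OF t] \<open>\<delta> > 0\<close> by (auto intro!: derivative_eq_intros simp: field_simps)
    show "cmod (deriv f (of_real t * z) * z) \<le> M * cmod z * (1 - t * cmod z) powr (-\<delta>-1)"
      using mult_right_mono[OF bd[OF tz(1)[OF t]] norm_ge_zero[of z]] t
      by (simp add: norm_mult mult_ac)
  qed simp
  then show ?thesis
    using divide_nonneg_pos[OF \<open>M \<ge> 0\<close> \<open>\<delta> > 0\<close>] by simp
qed

lemma deriv_diff_holomorphic:
  assumes "f holomorphic_on S" "g holomorphic_on S" "open S" "w \<in> S"
  shows "deriv (\<lambda>z. f z - g z) w = deriv f w - deriv g w"
  using assms by (intro deriv_diff holomorphic_on_imp_differentiable_at)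

lemma uniform_limit_deriv_diff:
  assumes "\<And>n. F n holomorphic_on S" "h holomorphic_on S" "open S" "K \<subseteq> S"
    and "uniform_limit K (\<lambda>n. deriv (F n)) (deriv h) sequentially"
  shows "uniform_limit K (\<lambda>n. deriv (\<lambda>z. F n z - h z)) (\<lambda>_. 0) sequentially"
proof -
  have "uniform_limit K (\<lambda>n w. deriv (F n) w - deriv h w) (\<lambda>w. deriv h w - deriv h w) sequentially"
    by (intro uniform_limit_minus assms uniform_limit_const)
  moreover have "deriv (\<lambda>z. F n z - h z) w = deriv (F n) w - deriv h w" if "w \<in> K" for n w
    using assms that by (intro deriv_diff_holomorphic[where S = S]) auto
  ultimately show ?thesis
    using uniform_limit_cong'[of K "\<lambda>n. deriv (\<lambda>z. F n z - h z)" "\<lambda>n w. deriv (F n) w - deriv h w"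
        "\<lambda>_. 0" "\<lambda>w. deriv h w - deriv h w"]
    by simp
qed

lemma holomorphic_convex_primitive_vanishing:
  assumes "convex S" "open S" "a \<in> S" "k holomorphic_on S"
  obtains h where "h a = 0" "\<And>z. z \<in> S \<Longrightarrow> (h has_field_derivative k z) (at z)"
proof -
  obtain p where p: "\<And>z. z \<in> S \<Longrightarrow> (p has_field_derivative k z) (at z within S)"
    using holomorphic_convex_primitive'[OF assms(1,2,4)] by blast
  show ?thesis
  proof (rule that[of "\<lambda>z. p z - p a"])
    fix z assume "z \<in> S"
    then show "((\<lambda>z. p z - p a) has_field_derivative k z) (at z)"
      using p[of z] at_within_open[OF _ assms(2)] by (auto intro!: derivative_eq_intros)
  qed simp
qed

lemma compact_subset_ball_norm_le:
  fixes K :: "'a::real_normed_vector set"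
  assumes "compact K" "K \<subseteq> ball 0 R"
  obtains r where "r < R" "\<And>z. z \<in> K \<Longrightarrow> norm z \<le> r"
proof (cases "K = {}")
  case True
  then show ?thesis by (intro that[of "R - 1"]) auto
next
  case False
  obtain x where "x \<in> K" "\<And>z. z \<in> K \<Longrightarrow> norm z \<le> norm x"
    using continuous_attains_sup[OF assms(1) False continuous_on_norm_id] by blast
  with assms(2) show ?thesis by (intro that[of "norm x"]) auto
qed

lemma one_minus_powr_le_one_minus_sq_powr:
  fixes s \<alpha> :: real
  assumes "0 \<le> s" "s \<le> 1" "0 \<le> \<alpha>"
  shows "(1 - s) powr \<alpha> \<le> (1 - s\<^sup>2) powr \<alpha>"
  using assms by (intro powr_mono2) (auto simp: power2_eq_square mult_left_le_one_le)

lemma one_minus_sq_powr_le: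
  fixes s \<alpha> :: real
  assumes "0 \<le> s" "s \<le> 1" "0 \<le> \<alpha>"
  shows "(1 - s\<^sup>2) powr \<alpha> \<le> 2 powr \<alpha> * (1 - s) powr \<alpha>"
proof -
  have "(1 - s\<^sup>2) powr \<alpha> \<le> (2 * (1 - s)) powr \<alpha>"
    using assms sum_squares_ge_zero[of "1 - s" 0]
    by (intro powr_mono2) (auto simp: power2_eq_square mult_le_one algebra_simps)
  then show ?thesis by (simp only: powr_mult)
qed

lemma one_minus_sq_powr_le_1:
  fixes s \<alpha> :: real
  assumes "0 \<le> s" "s \<le> 1" "0 \<le> \<alpha>"
  shows "(1 - s\<^sup>2) powr \<alpha> \<le> 1"
  using assms by (intro powr_le1) (auto simp: power2_eq_square mult_le_one)

lemma norm_one_minus_powr_le: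
  fixes z :: complex
  assumes "cmod z \<le> r" "r < 1"
  shows "cmod (1 - z) powr (-\<beta>) \<le> 2 powr \<bar>\<beta>\<bar> * (1 - r) powr (- max \<beta> 0)"
proof -
  have lower: "1 - r \<le> cmod (1 - z)" and upper: "cmod (1 - z) \<le> 2"
    using norm_triangle_ineq2[of 1 z] norm_triangle_ineq4[of 1 z] assms by auto
  show ?thesis
  proof (cases "\<beta> \<ge> 0")
    case True
    have "cmod (1 - z) powr (-\<beta>) \<le> (1 - r) powr (-\<beta>)"
      using True lower assms by (intro powr_mono2') auto
    also have "\<dots> \<le> 2 powr \<bar>\<beta>\<bar> * (1 - r) powr (-\<beta>)"
      using ge_one_powr_ge_zero[of 2 "\<bar>\<beta>\<bar>"] by (simp add: mult_le_cancel_right1)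
    finally show ?thesis using True by simp
  next
    case False
    have "cmod (1 - z) powr (-\<beta>) \<le> 2 powr (-\<beta>)"
      using False lower upper assms by (intro powr_mono2) auto
    then show ?thesis using False assms by simp
  qed
qed

lemma exists_radius_powr_less:
  fixes A \<epsilon> e :: real
  assumes "0 < \<epsilon>" "0 < e"
  obtains \<rho> where "1/2 \<le> \<rho>" "\<rho> < 1" "A * (1 - \<rho>) powr \<epsilon> < e"
proof -
  have "((\<lambda>t. A * t powr \<epsilon>) \<longlongrightarrow> 0) (at_right 0)"
    using \<open>0 < \<epsilon>\<close>
    by (intro tendsto_mult_right_zero tendsto_zero_powrI[where b = \<epsilon>] tendsto_ident_at tendsto_const)
       (auto simp: eventually_at_right_field intro!: exI[of _ 1])
  then have "\<forall>\<^sub>F t in at_right 0. A * t powr \<epsilon> < e"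
    using \<open>0 < e\<close> by (rule order_tendstoD)
  moreover have "\<forall>\<^sub>F t in at_right 0. 0 < t \<and> t \<le> (1/2 :: real)"
    by (auto simp: eventually_at_right_field intro!: exI[of _ "1/2"])
  ultimately obtain t where "0 < t" "t \<le> 1/2" "A * t powr \<epsilon> < e"
    using eventually_happens'[OF trivial_limit_at_right_real eventually_conj] by blast
  then show ?thesis by (intro that[of "1 - t"]) auto
qed

section \<open>Bloch spaces\<close>

lemma bloch_weight_le_bloch_norm:
  assumes "f \<in> bloch_space \<alpha>" "z \<in> ball 0 1"
  shows "(1 - (cmod z)\<^sup>2) powr \<alpha> * cmod (deriv f z) \<le> bloch_norm \<alpha> f"
  unfolding bloch_norm_def by (rule cSUP_upper) (use assms in \<open>auto simp: bloch_space_def\<close>)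

lemma bloch_norm_nonneg: "f \<in> bloch_space \<alpha> \<Longrightarrow> 0 \<le> bloch_norm \<alpha> f"
  using bloch_weight_le_bloch_norm[of f \<alpha> 0] by simp (meson norm_ge_zero order_trans)

lemma bloch_norm_le:
  assumes "\<And>z. z \<in> ball 0 1 \<Longrightarrow> (1 - (cmod z)\<^sup>2) powr \<alpha> * cmod (deriv f z) \<le> c"
  shows "bloch_norm \<alpha> f \<le> c"
  unfolding bloch_norm_def by (rule cSUP_least) (use assms in auto)

lemma bloch_spaceI:
  assumes "f holomorphic_on ball 0 1"
    and "\<And>z. z \<in> ball 0 1 \<Longrightarrow> (1 - (cmod z)\<^sup>2) powr \<alpha> * cmod (deriv f z) \<le> c"
  shows "f \<in> bloch_space \<alpha>"
  using assms by (auto simp: bloch_space_def intro!: bdd_aboveI2)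

lemma bloch_norm_cong:
  assumes "\<And>z. z \<in> ball 0 1 \<Longrightarrow> f z = g z"
  shows "bloch_norm \<alpha> f = bloch_norm \<alpha> g"
proof -
  have "deriv f z = deriv g z" if "z \<in> ball 0 1" for z
    using assms that
    by (intro deriv_cong_ev refl eventually_mono[OF eventually_nhds_in_open[OF open_ball that]]) auto
  then show ?thesis unfolding bloch_norm_def by (intro SUP_cong) auto
qed

lemma bloch0_diff:
  assumes f: "f \<in> bloch0 \<alpha>" and g: "g \<in> bloch0 \<alpha>"
  shows "(\<lambda>z. f z - g z) \<in> bloch0 \<alpha>"
    and "bloch_norm \<alpha> (\<lambda>z. f z - g z) \<le> bloch_norm \<alpha> f + bloch_norm \<alpha> g"
proof -
  have fB: "f \<in> bloch_space \<alpha>" and gB: "g \<in> bloch_space \<alpha>"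
    and hol: "f holomorphic_on ball 0 1" "g holomorphic_on ball 0 1"
    using f g by (auto simp: bloch0_def bloch_space_def)
  have weighted: "(1 - (cmod w)\<^sup>2) powr \<alpha> * cmod (deriv (\<lambda>z. f z - g z) w)
                  \<le> bloch_norm \<alpha> f + bloch_norm \<alpha> g"
    if w: "w \<in> ball 0 1" for w
  proof -
    have "(1 - (cmod w)\<^sup>2) powr \<alpha> * cmod (deriv (\<lambda>z. f z - g z) w)
          \<le> (1 - (cmod w)\<^sup>2) powr \<alpha> * cmod (deriv f w) + (1 - (cmod w)\<^sup>2) powr \<alpha> * cmod (deriv g w)"
      unfolding deriv_diff_holomorphic[OF hol open_ball w] distrib_left[symmetric]
      by (intro mult_left_mono norm_triangle_ineq4) simp
    also have "\<dots> \<le> bloch_norm \<alpha> f + bloch_norm \<alpha> g"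
      by (intro add_mono bloch_weight_le_bloch_norm fB gB w)
    finally show ?thesis .
  qed
  moreover have "(\<lambda>z. f z - g z) holomorphic_on ball 0 1"
    using hol by (intro holomorphic_intros)
  ultimately have "(\<lambda>z. f z - g z) \<in> bloch_space \<alpha>"
    by (rule bloch_spaceI[rotated])
  then show "(\<lambda>z. f z - g z) \<in> bloch0 \<alpha>"
    using f g by (simp add: bloch0_def)
  show "bloch_norm \<alpha> (\<lambda>z. f z - g z) \<le> bloch_norm \<alpha> f + bloch_norm \<alpha> g"
    by (rule bloch_norm_le[OF weighted])
qed

lemma norm_deriv_le_of_bloch_bound:
  assumes bd: "(1 - (cmod w)\<^sup>2) powr \<alpha> * cmod (deriv f w) \<le> M"
    and w: "cmod w < 1" and "0 \<le> \<alpha>"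
  shows "cmod (deriv f w) \<le> M * (1 - cmod w) powr (-\<alpha>)"
proof -
  have "(1 - cmod w) powr \<alpha> * cmod (deriv f w) \<le> M"
    using one_minus_powr_le_one_minus_sq_powr[of "cmod w" \<alpha>] w \<open>0 \<le> \<alpha>\<close> bd
    by (meson less_imp_le mult_right_mono norm_ge_zero order_trans)
  then show ?thesis
    using w by (simp add: powr_minus_divide field_simps)
qed

lemma bounded_on_compact_of_bloch_weight_bound:
  assumes "0 \<le> \<alpha>" "compact K" "K \<subseteq> ball 0 1"
  shows "\<exists>C. \<forall>\<phi>. (\<forall>w\<in>ball 0 1. (1 - (cmod w)\<^sup>2) powr \<alpha> * cmod (\<phi> w) \<le> B) \<longrightarrow>
                (\<forall>z\<in>K. cmod (\<phi> z) \<le> C)"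
proof -
  obtain r where r: "r < 1" "\<And>z. z \<in> K \<Longrightarrow> cmod z \<le> r"
    using compact_subset_ball_norm_le[OF assms(2,3)] by blast
  have "cmod (\<phi> z) \<le> B / (1 - r\<^sup>2) powr \<alpha>"
    if \<phi>: "\<forall>w\<in>ball 0 1. (1 - (cmod w)\<^sup>2) powr \<alpha> * cmod (\<phi> w) \<le> B" and z: "z \<in> K" for \<phi> z
  proof -
    have z1: "0 \<le> cmod z" "cmod z \<le> r" "z \<in> ball 0 1" using r z assms(3) by auto
    then have "0 \<le> r" by linarith
    then have pos: "0 < 1 - r\<^sup>2" using r by (simp add: abs_square_less_1)
    have "(1 - r\<^sup>2) powr \<alpha> \<le> (1 - (cmod z)\<^sup>2) powr \<alpha>"
      using z1 pos assms(1) by (intro powr_mono2 diff_left_mono power_mono) auto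
    then have "(1 - r\<^sup>2) powr \<alpha> * cmod (\<phi> z) \<le> B"
      using \<phi> z1(3) by (meson mult_right_mono norm_ge_zero order_trans)
    then show ?thesis using pos by (simp add: field_simps)
  qed
  then show ?thesis by blast
qed

lemma bloch_derivs_convergent_subseq:
  fixes F :: "nat \<Rightarrow> complex \<Rightarrow> complex"
  assumes "0 \<le> \<alpha>" and hol: "\<And>n. F n holomorphic_on ball 0 1"
    and bd: "\<And>n z. z \<in> ball 0 1 \<Longrightarrow> (1 - (cmod z)\<^sup>2) powr \<alpha> * cmod (deriv (F n) z) \<le> B"
  obtains r k where "strict_mono r" "k holomorphic_on ball 0 1"
    "\<And>z. z \<in> ball 0 1 \<Longrightarrow> (1 - (cmod z)\<^sup>2) powr \<alpha> * cmod (k z) \<le> B"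
    "\<And>K. compact K \<Longrightarrow> K \<subseteq> ball 0 1 \<Longrightarrow> uniform_limit K (\<lambda>n. deriv (F (r n))) k sequentially"
proof -
  define \<H> where "\<H> = {\<phi>. \<phi> holomorphic_on ball 0 1 \<and>
                         (\<forall>w\<in>ball 0 1. (1 - (cmod w)\<^sup>2) powr \<alpha> * cmod (\<phi> w) \<le> B)}"
  have rng: "range (\<lambda>n. deriv (F n)) \<subseteq> \<H>"
    using bd holomorphic_deriv[OF hol open_ball] by (auto simp: \<H>_def)
  have bnd: "\<exists>C. \<forall>\<phi>\<in>\<H>. \<forall>z\<in>K. cmod (\<phi> z) \<le> C" if K: "compact K" "K \<subseteq> ball 0 1" for K
  proof -
    obtain C where "\<forall>\<phi>. (\<forall>w\<in>ball 0 1. (1 - (cmod w)\<^sup>2) powr \<alpha> * cmod (\<phi> w) \<le> B) \<longrightarrow>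
                          (\<forall>z\<in>K. cmod (\<phi> z) \<le> C)"
      using bounded_on_compact_of_bloch_weight_bound[OF assms(1) K] by blast
    then show ?thesis by (auto simp: \<H>_def)
  qed
  obtain k r where k: "k holomorphic_on ball 0 1" and r: "strict_mono (r :: nat \<Rightarrow> nat)"
    and ptw: "\<And>x. x \<in> ball 0 1 \<Longrightarrow> ((\<lambda>n. deriv (F (r n)) x) \<longlongrightarrow> k x) sequentially"
    and unif: "\<And>K. \<lbrakk>compact K; K \<subseteq> ball 0 1\<rbrakk> \<Longrightarrow> uniform_limit K ((\<lambda>n. deriv (F n)) \<circ> r) k sequentially"
    by (rule Montel[OF open_ball _ bnd rng]) (auto simp: \<H>_def)
  have "(1 - (cmod z)\<^sup>2) powr \<alpha> * cmod (k z) \<le> B" if z: "z \<in> ball 0 1" for z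
  proof (rule LIMSEQ_le_const2)
    show "(\<lambda>n. (1 - (cmod z)\<^sup>2) powr \<alpha> * cmod (deriv (F (r n)) z)) \<longlonglongrightarrow> (1 - (cmod z)\<^sup>2) powr \<alpha> * cmod (k z)"
      by (intro tendsto_mult_left tendsto_norm ptw z)
  qed (use bd z in auto)
  then show ?thesis
    using unif unfolding comp_def by (rule that[OF r k])
qed

lemma bloch0_bounded_seq_deriv_subseq:
  fixes F :: "nat \<Rightarrow> complex \<Rightarrow> complex"
  assumes "0 \<le> \<alpha>" and F: "\<And>n. F n \<in> bloch0 \<alpha>" and B: "\<And>n. bloch_norm \<alpha> (F n) \<le> B"
  obtains r h where "strict_mono r" "h \<in> bloch0 \<alpha>" "bloch_norm \<alpha> h \<le> B"
    "\<And>K. compact K \<Longrightarrow> K \<subseteq> ball 0 1 \<Longrightarrow> uniform_limit K (\<lambda>n. deriv (F (r n))) (deriv h) sequentially"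
proof -
  have hol: "\<And>n. F n holomorphic_on ball 0 1"
    using F by (auto simp: bloch0_def bloch_space_def)
  have weight: "(1 - (cmod z)\<^sup>2) powr \<alpha> * cmod (deriv (F n) z) \<le> B" if "z \<in> ball 0 1" for n z
    using bloch_weight_le_bloch_norm[of "F n" \<alpha> z] F[of n] B[of n] that by (auto simp: bloch0_def)
  obtain r k where r: "strict_mono r" and k: "k holomorphic_on ball 0 1"
    and kB: "\<And>z. z \<in> ball 0 1 \<Longrightarrow> (1 - (cmod z)\<^sup>2) powr \<alpha> * cmod (k z) \<le> B"
    and unif: "\<And>K. compact K \<Longrightarrow> K \<subseteq> ball 0 1 \<Longrightarrow> uniform_limit K (\<lambda>n. deriv (F (r n))) k sequentially"
    using bloch_derivs_convergent_subseq[where F = F, OF assms(1) hol weight] by blast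
  have "0 \<in> ball (0::complex) 1" by simp
  then obtain h where h0: "h 0 = 0" and h: "\<And>z. z \<in> ball 0 1 \<Longrightarrow> (h has_field_derivative k z) (at z)"
    using holomorphic_convex_primitive_vanishing[OF convex_ball open_ball _ k] by blast
  have dh: "deriv h z = k z" if "z \<in> ball 0 1" for z
    using DERIV_imp_deriv[OF h[OF that]] .
  have "h holomorphic_on ball 0 1"
    unfolding holomorphic_on_open[OF open_ball] using h by blast
  then have "h \<in> bloch0 \<alpha>" "bloch_norm \<alpha> h \<le> B"
    using kB dh h0 by (auto simp: bloch0_def intro!: bloch_spaceI bloch_norm_le)
  moreover have "uniform_limit K (\<lambda>n. deriv (F (r n))) (deriv h) sequentially"
    if "compact K" "K \<subseteq> ball 0 1" for K
  proof -
    have "uniform_limit K (\<lambda>n. deriv (F (r n))) k sequentially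
          \<longleftrightarrow> uniform_limit K (\<lambda>n. deriv (F (r n))) (deriv h) sequentially"
      using dh that(2) by (intro uniform_limit_cong') auto
    then show ?thesis using unif[OF that] by simp
  qed
  ultimately show ?thesis by (rule that[OF r])
qed

section \<open>The Cesaro operator\<close>

text \<open>The derivative of \<open>C\<^sub>\<beta> f\<close>: the integrand of \<^const>\<open>cesaro_op\<close> with its removable
  singularity at \<open>0\<close> (for \<open>f 0 = 0\<close>) filled in.\<close>
definition cesaro_integrand :: "real \<Rightarrow> (complex \<Rightarrow> complex) \<Rightarrow> complex \<Rightarrow> complex" where
  "cesaro_integrand \<beta> f z = (if z = 0 then deriv f 0 else f z / (z * (1 - z) powr of_real \<beta>))"

lemma one_minus_notin_nonpos_Reals: "w \<in> ball (0::complex) 1 \<Longrightarrow> 1 - w \<notin> \<real>\<^sub>\<le>\<^sub>0"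
  using abs_Re_le_cmod[of w] by (auto simp: complex_nonpos_Reals_iff)

lemma holomorphic_on_cesaro_integrand:
  assumes hol: "f holomorphic_on ball 0 1" and f0: "f 0 = 0"
  shows "cesaro_integrand \<beta> f holomorphic_on ball 0 1"
proof -
  have "(\<lambda>z. if z = 0 then deriv f 0 else (f z - f 0) / (z - 0)) holomorphic_on ball 0 1"
    by (rule pole_lemma[OF hol]) simp
  then have "(\<lambda>z. (if z = 0 then deriv f 0 else (f z - f 0) / (z - 0)) / (1 - z) powr of_real \<beta>)
               holomorphic_on ball 0 1"
    by (auto intro!: holomorphic_intros one_minus_notin_nonpos_Reals)
  moreover have "(\<lambda>z. (if z = 0 then deriv f 0 else (f z - f 0) / (z - 0)) / (1 - z) powr of_real \<beta>)
                 = cesaro_integrand \<beta> f"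
    by (auto simp: fun_eq_iff cesaro_integrand_def f0)
  ultimately show ?thesis by simp
qed

lemma norm_cesaro_integrand:
  assumes "z \<noteq> 0"
  shows "cmod (cesaro_integrand \<beta> f z) = cmod (f z) / cmod z * cmod (1 - z) powr (-\<beta>)"
  using assms by (simp add: cesaro_integrand_def norm_divide norm_mult norm_powr_real_powr' powr_minus_divide)

lemma cesaro_op_primitive:
  assumes hol: "f holomorphic_on ball 0 1" and f0: "f 0 = 0"
  shows "\<exists>g. \<forall>z\<in>ball 0 1.
           ((\<lambda>w. f w / (w * (1 - w) powr of_real \<beta>)) has_contour_integral (g z - g 0)) (linepath 0 z) \<and>
           (g has_field_derivative cesaro_integrand \<beta> f z) (at z)"
proof -
  obtain g where g_within:
    "\<And>z. z \<in> ball 0 1 \<Longrightarrow> (g has_field_derivative cesaro_integrand \<beta> f z) (at z within ball 0 1)"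
    using holomorphic_convex_primitive'[OF convex_ball open_ball
            holomorphic_on_cesaro_integrand[OF hol f0, where \<beta> = \<beta>]]
    by blast
  have g: "(g has_field_derivative cesaro_integrand \<beta> f z) (at z)" if "z \<in> ball 0 1" for z
    using g_within[OF that] by (simp add: at_within_open[OF that open_ball])
  have int: "((\<lambda>w. f w / (w * (1 - w) powr of_real \<beta>)) has_contour_integral (g z - g 0)) (linepath 0 z)"
    if z: "z \<in> ball 0 1" for z
  proof -
    have "path_image (linepath 0 z) \<subseteq> ball 0 1"
      unfolding path_image_linepath by (rule closed_segment_subset) (use z in auto)
    then have "(cesaro_integrand \<beta> f has_contour_integral (g z - g 0)) (linepath 0 z)"
      using contour_integral_primitive[OF g_within valid_path_linepath]
      by (simp only: pathfinish_linepath pathstart_linepath)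
    then have hG: "((\<lambda>t. cesaro_integrand \<beta> f (linepath 0 z t) * vector_derivative (linepath 0 z) (at t within {0..1}))
                    has_integral (g z - g 0)) {0..1}"
      unfolding has_contour_integral_def .
    have eq: "f (linepath 0 z t) / (linepath 0 z t * (1 - linepath 0 z t) powr of_real \<beta>) *
            vector_derivative (linepath 0 z) (at t within {0..1})
          = cesaro_integrand \<beta> f (linepath 0 z t) * vector_derivative (linepath 0 z) (at t within {0..1})"
      if t: "t \<in> {0..1} - {0}" for t
    proof (cases "z = 0")
      case False
      then have "linepath 0 z t \<noteq> 0" using t by (simp add: linepath_def scaleR_conv_of_real)
      then show ?thesis by (simp add: cesaro_integrand_def)
    qed (use t in \<open>simp add: vector_derivative_linepath_within\<close>)
    show ?thesis
      unfolding has_contour_integral_def by (rule has_integral_spike_finite[of "{0}", OF _ eq hG]) simp_all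
  qed
  show ?thesis by (intro exI[of _ g] ballI conjI int g)
qed

lemma cesaro_op_integrable:
  assumes "f holomorphic_on ball 0 1" "f 0 = 0" "z \<in> ball 0 1"
  shows "(\<lambda>w. f w / (w * (1 - w) powr of_real \<beta>)) contour_integrable_on linepath 0 z"
proof -
  obtain g where "\<forall>z\<in>ball 0 1.
      ((\<lambda>w. f w / (w * (1 - w) powr of_real \<beta>)) has_contour_integral (g z - g 0)) (linepath 0 z) \<and>
      (g has_field_derivative cesaro_integrand \<beta> f z) (at z)"
    using cesaro_op_primitive[OF assms(1,2)] ..
  with assms(3) show ?thesis by (auto simp: contour_integrable_on_def)
qed

lemma cesaro_op_has_field_derivative:
  assumes "f holomorphic_on ball 0 1" "f 0 = 0" "z \<in> ball 0 1"
  shows "(cesaro_op \<beta> f has_field_derivative cesaro_integrand \<beta> f z) (at z)"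
proof -
  obtain g where g: "\<forall>z\<in>ball 0 1.
      ((\<lambda>w. f w / (w * (1 - w) powr of_real \<beta>)) has_contour_integral (g z - g 0)) (linepath 0 z) \<and>
      (g has_field_derivative cesaro_integrand \<beta> f z) (at z)"
    using cesaro_op_primitive[OF assms(1,2)] ..
  have "((\<lambda>w. g w - g 0) has_field_derivative cesaro_integrand \<beta> f z) (at z)"
    using g assms(3) by (auto intro!: derivative_eq_intros)
  moreover have "g w - g 0 = cesaro_op \<beta> f w" if "w \<in> ball 0 1" for w
    unfolding cesaro_op_def using g that by (intro contour_integral_unique[symmetric]) blast
  ultimately show ?thesis
    by (rule has_field_derivative_transform_within_open[OF _ open_ball assms(3)])
qed

lemma deriv_cesaro_op:
  "f holomorphic_on ball 0 1 \<Longrightarrow> f 0 = 0 \<Longrightarrow> z \<in> ball 0 1 \<Longrightarrow>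
     deriv (cesaro_op \<beta> f) z = cesaro_integrand \<beta> f z"
  by (rule DERIV_imp_deriv[OF cesaro_op_has_field_derivative])

lemma holomorphic_on_cesaro_op:
  assumes "f holomorphic_on ball 0 1" "f 0 = 0"
  shows "cesaro_op \<beta> f holomorphic_on ball 0 1"
  unfolding holomorphic_on_open[OF open_ball]
  using cesaro_op_has_field_derivative[OF assms, where \<beta> = \<beta>] by blast

lemma cesaro_op_0: "cesaro_op \<beta> f 0 = 0"
  by (simp add: cesaro_op_def)

lemma cesaro_op_linear:
  assumes "f holomorphic_on ball 0 1" "f 0 = 0" "h holomorphic_on ball 0 1" "h 0 = 0" "z \<in> ball 0 1"
  shows "cesaro_op \<beta> (\<lambda>w. a * f w + b * h w) z = a * cesaro_op \<beta> f z + b * cesaro_op \<beta> h z"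
proof -
  have "(\<lambda>w. (a * f w + b * h w) / (w * (1 - w) powr of_real \<beta>))
        = (\<lambda>w. a * (f w / (w * (1 - w) powr of_real \<beta>)) + b * (h w / (w * (1 - w) powr of_real \<beta>)))"
    by (simp add: fun_eq_iff add_divide_distrib)
  then show ?thesis
    unfolding cesaro_op_def
    using cesaro_op_integrable[OF assms(1,2,5), where \<beta> = \<beta>]
      cesaro_op_integrable[OF assms(3,4,5), where \<beta> = \<beta>]
    by (simp only: contour_integral_add contour_integrable_lmul contour_integral_lmul)
qed

lemma cesaro_integrand_outer_bound:
  fixes \<alpha> \<beta> \<delta> M :: real
  assumes "0 \<le> \<alpha>" "0 < \<delta>" "\<alpha> - 1 \<le> \<delta>" "0 \<le> M"
    and hol: "f holomorphic_on ball 0 1" and f0: "f 0 = 0"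
    and bd: "\<And>w. w \<in> ball 0 1 \<Longrightarrow> (1 - (cmod w)\<^sup>2) powr \<alpha> * cmod (deriv f w) \<le> M"
    and z: "cmod z < 1" "1/2 \<le> cmod z"
  shows "(1 - (cmod z)\<^sup>2) powr \<alpha> * cmod (cesaro_integrand \<beta> f z)
           \<le> 2 powr (\<alpha> + 1 + \<bar>\<beta>\<bar>) / \<delta> * M * (1 - cmod z) powr (\<alpha> - \<delta> - max \<beta> 0)"
proof -
  define s where "s = cmod z"
  have s: "1/2 \<le> s" "s < 1" using z by (auto simp: s_def)
  then have "1/s \<le> 2" "z \<noteq> 0" by (auto simp: divide_le_eq s_def)
  \<comment> \<open>Weakening the exponent to \<open>-\<delta>-1\<close> avoids separate bounded and logarithmic cases for
    \<open>\<alpha> \<le> 1\<close>: \<open>f\<close> then grows like \<open>(1 - |z|)\<^bsup>-\<delta>\<^esup>\<close> in every case.\<close>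
  have "cmod (deriv f w) \<le> M * (1 - cmod w) powr (-\<delta>-1)" if w: "w \<in> ball 0 1" for w
  proof -
    have "cmod (deriv f w) \<le> M * (1 - cmod w) powr (-\<alpha>)"
      using norm_deriv_le_of_bloch_bound[OF bd[OF w]] w \<open>0 \<le> \<alpha>\<close> by simp
    also have "\<dots> \<le> M * (1 - cmod w) powr (-\<delta>-1)"
      using w assms by (intro mult_left_mono powr_mono') auto
    finally show ?thesis .
  qed
  then have fz: "cmod (f z) \<le> M * (1 - s) powr (-\<delta>) / \<delta>"
    using growth_bound_of_deriv_growth[OF hol \<open>0 < \<delta>\<close> \<open>0 \<le> M\<close>] z f0 by (simp add: s_def)
  have "(1 - s\<^sup>2) powr \<alpha> * cmod (cesaro_integrand \<beta> f z)
        = (1 - s\<^sup>2) powr \<alpha> * cmod (f z) * (1/s) * cmod (1 - z) powr (-\<beta>)"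
    using s by (simp add: norm_cesaro_integrand[OF \<open>z \<noteq> 0\<close>] s_def)
  also have "\<dots> \<le> (2 powr \<alpha> * (1 - s) powr \<alpha>) * (M * (1 - s) powr (-\<delta>) / \<delta>) * 2
                   * (2 powr \<bar>\<beta>\<bar> * (1 - s) powr (- max \<beta> 0))"
    using s \<open>1/s \<le> 2\<close> assms
    by (intro mult_mono one_minus_sq_powr_le fz norm_one_minus_powr_le) (auto simp: s_def)
  also have "\<dots> = 2 powr (\<alpha> + 1 + \<bar>\<beta>\<bar>) / \<delta> * M * (1 - s) powr (\<alpha> - \<delta> - max \<beta> 0)"
  proof -
    have "(1 - s) powr (\<alpha> - \<delta> - max \<beta> 0) = (1 - s) powr \<alpha> * (1 - s) powr (-\<delta>) * (1 - s) powr (- max \<beta> 0)"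
      unfolding diff_conv_add_uminus powr_add ..
    moreover have "2 powr (\<alpha> + 1 + \<bar>\<beta>\<bar>) = 2 powr \<alpha> * 2 * 2 powr \<bar>\<beta>\<bar>"
      unfolding powr_add by simp
    ultimately show ?thesis by simp
  qed
  finally show ?thesis by (simp add: s_def)
qed

lemma cesaro_integrand_inner_bound:
  assumes hol: "f holomorphic_on ball 0 1" and f0: "f 0 = 0" and "r < 1"
    and eta: "\<And>w. w \<in> cball 0 r \<Longrightarrow> cmod (deriv f w) \<le> \<eta>" and z: "cmod z \<le> r"
  shows "cmod (cesaro_integrand \<beta> f z) \<le> 2 powr \<bar>\<beta>\<bar> * (1 - r) powr (- max \<beta> 0) * \<eta>"
proof -
  have "0 \<le> r" using z norm_ge_zero[of z] by linarith
  then have "cmod (deriv f 0) \<le> \<eta>" by (intro eta) simp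
  then have "0 \<le> \<eta>" by (rule order_trans[OF norm_ge_zero])
  have C: "1 \<le> 2 powr \<bar>\<beta>\<bar> * (1 - r) powr (- max \<beta> 0)"
    using norm_one_minus_powr_le[of 0 r \<beta>] \<open>0 \<le> r\<close> \<open>r < 1\<close> by simp
  show ?thesis
  proof (cases "z = 0")
    case True
    then have "cmod (cesaro_integrand \<beta> f z) \<le> \<eta>"
      using \<open>cmod (deriv f 0) \<le> \<eta>\<close> by (simp add: cesaro_integrand_def)
    then show ?thesis using mult_right_mono[OF C \<open>0 \<le> \<eta>\<close>] by simp
  next
    case False
    have "cmod (f z - f 0) \<le> \<eta> * cmod (z - 0)"
    proof (rule field_differentiable_bound[OF convex_cball, where f' = "deriv f"])
      fix w :: complex assume w: "w \<in> cball 0 r"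
      then have "w \<in> ball 0 1" using \<open>r < 1\<close> by simp
      then show "(f has_field_derivative deriv f w) (at w within cball 0 r)"
        using hol by (auto intro: holomorphic_derivI)
      show "cmod (deriv f w) \<le> \<eta>" by (rule eta[OF w])
    qed (use z \<open>0 \<le> r\<close> in auto)
    then have fz: "cmod (f z) / cmod z \<le> \<eta>"
      using f0 False by (simp add: divide_le_eq)
    have "cmod (cesaro_integrand \<beta> f z) = cmod (f z) / cmod z * cmod (1 - z) powr (-\<beta>)"
      by (rule norm_cesaro_integrand[OF False])
    also have "\<dots> \<le> \<eta> * (2 powr \<bar>\<beta>\<bar> * (1 - r) powr (- max \<beta> 0))"
      using fz z \<open>r < 1\<close> \<open>0 \<le> \<eta>\<close> by (intro mult_mono norm_one_minus_powr_le) auto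
    finally show ?thesis by (simp add: mult_ac)
  qed
qed

lemma cesaro_integrand_bloch_bound:
  fixes \<alpha> \<beta> \<delta> M \<rho> \<eta> :: real
  assumes "0 \<le> \<alpha>" "0 < \<delta>" "\<alpha> - 1 \<le> \<delta>" "\<delta> \<le> \<alpha> - max \<beta> 0" "0 \<le> M"
    and hol: "f holomorphic_on ball 0 1" and f0: "f 0 = 0"
    and bd: "\<And>w. w \<in> ball 0 1 \<Longrightarrow> (1 - (cmod w)\<^sup>2) powr \<alpha> * cmod (deriv f w) \<le> M"
    and \<rho>: "1/2 \<le> \<rho>" "\<rho> < 1"
    and eta: "\<And>w. w \<in> cball 0 \<rho> \<Longrightarrow> cmod (deriv f w) \<le> \<eta>"
    and z: "z \<in> ball 0 1"
  shows "(1 - (cmod z)\<^sup>2) powr \<alpha> * cmod (cesaro_integrand \<beta> f z)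
           \<le> max (2 powr (\<alpha> + 1 + \<bar>\<beta>\<bar>) / \<delta> * M * (1 - \<rho>) powr (\<alpha> - \<delta> - max \<beta> 0))
                 (2 powr \<bar>\<beta>\<bar> * (1 - \<rho>) powr (- max \<beta> 0) * \<eta>)"
proof (cases "cmod z \<le> \<rho>")
  case True
  have "(1 - (cmod z)\<^sup>2) powr \<alpha> * cmod (cesaro_integrand \<beta> f z) \<le> cmod (cesaro_integrand \<beta> f z)"
    using one_minus_sq_powr_le_1[of "cmod z" \<alpha>] z \<open>0 \<le> \<alpha>\<close> by (intro mult_left_le_one_le) auto
  also have "\<dots> \<le> 2 powr \<bar>\<beta>\<bar> * (1 - \<rho>) powr (- max \<beta> 0) * \<eta>"
    by (rule cesaro_integrand_inner_bound[OF hol f0 \<open>\<rho> < 1\<close> eta True])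
  finally show ?thesis by simp
next
  case False
  have "(1 - (cmod z)\<^sup>2) powr \<alpha> * cmod (cesaro_integrand \<beta> f z)
        \<le> 2 powr (\<alpha> + 1 + \<bar>\<beta>\<bar>) / \<delta> * M * (1 - cmod z) powr (\<alpha> - \<delta> - max \<beta> 0)"
    using False z \<rho> assms(1-5) by (intro cesaro_integrand_outer_bound[OF _ _ _ _ hol f0 bd]) auto
  also have "\<dots> \<le> 2 powr (\<alpha> + 1 + \<bar>\<beta>\<bar>) / \<delta> * M * (1 - \<rho>) powr (\<alpha> - \<delta> - max \<beta> 0)"
    using False z assms(1-5) by (intro mult_left_mono powr_mono2) auto
  finally show ?thesis by simp
qed

lemma cesaro_exponent_exists:
  fixes \<alpha> \<beta> :: real
  assumes "0 < \<alpha>" "\<beta> < \<alpha>" "\<beta> < 1"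
  shows "\<exists>\<delta>. 0 < \<delta> \<and> \<alpha> - 1 \<le> \<delta> \<and> \<delta> < \<alpha> - max \<beta> 0"
  using assms by (intro exI[of _ "(max 0 (\<alpha> - 1) + (\<alpha> - max \<beta> 0)) / 2"]) auto

lemma cesaro_op_bloch_bound:
  fixes \<alpha> \<beta> \<delta> M \<rho> \<eta> :: real
  assumes "0 \<le> \<alpha>" "0 < \<delta>" "\<alpha> - 1 \<le> \<delta>" "\<delta> \<le> \<alpha> - max \<beta> 0" "0 \<le> M"
    and hol: "f holomorphic_on ball 0 1" and f0: "f 0 = 0"
    and "\<And>w. w \<in> ball 0 1 \<Longrightarrow> (1 - (cmod w)\<^sup>2) powr \<alpha> * cmod (deriv f w) \<le> M"
    and "1/2 \<le> \<rho>" "\<rho> < 1"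
    and "\<And>w. w \<in> cball 0 \<rho> \<Longrightarrow> cmod (deriv f w) \<le> \<eta>"
  shows "cesaro_op \<beta> f \<in> bloch_space \<alpha>"
    and "bloch_norm \<alpha> (cesaro_op \<beta> f)
           \<le> max (2 powr (\<alpha> + 1 + \<bar>\<beta>\<bar>) / \<delta> * M * (1 - \<rho>) powr (\<alpha> - \<delta> - max \<beta> 0))
                 (2 powr \<bar>\<beta>\<bar> * (1 - \<rho>) powr (- max \<beta> 0) * \<eta>)"
proof -
  have bound: "(1 - (cmod z)\<^sup>2) powr \<alpha> * cmod (deriv (cesaro_op \<beta> f) z)
        \<le> max (2 powr (\<alpha> + 1 + \<bar>\<beta>\<bar>) / \<delta> * M * (1 - \<rho>) powr (\<alpha> - \<delta> - max \<beta> 0))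
              (2 powr \<bar>\<beta>\<bar> * (1 - \<rho>) powr (- max \<beta> 0) * \<eta>)"
    if z: "z \<in> ball 0 1" for z
    unfolding deriv_cesaro_op[OF hol f0 z] by (rule cesaro_integrand_bloch_bound[OF assms z])
  then show "cesaro_op \<beta> f \<in> bloch_space \<alpha>"
    by (intro bloch_spaceI holomorphic_on_cesaro_op hol f0)
  show "bloch_norm \<alpha> (cesaro_op \<beta> f)
          \<le> max (2 powr (\<alpha> + 1 + \<bar>\<beta>\<bar>) / \<delta> * M * (1 - \<rho>) powr (\<alpha> - \<delta> - max \<beta> 0))
                (2 powr \<bar>\<beta>\<bar> * (1 - \<rho>) powr (- max \<beta> 0) * \<eta>)"
    by (rule bloch_norm_le[OF bound])
qed

lemma cesaro_op_in_bloch0: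
  assumes "0 < \<alpha>" "\<beta> < \<alpha>" "\<beta> < 1" and f: "f \<in> bloch0 \<alpha>"
  shows "cesaro_op \<beta> f \<in> bloch0 \<alpha>"
proof -
  have hol: "f holomorphic_on ball 0 1" and f0: "f 0 = 0" and fB: "f \<in> bloch_space \<alpha>"
    using f by (auto simp: bloch0_def bloch_space_def)
  obtain \<delta> where \<delta>: "0 < \<delta>" "\<alpha> - 1 \<le> \<delta>" "\<delta> < \<alpha> - max \<beta> 0"
    using cesaro_exponent_exists[OF assms(1-3)] by blast
  have "bounded (deriv f ` cball 0 (1/2))"
    using holomorphic_on_imp_continuous_on[OF holomorphic_deriv[OF hol open_ball]]
    by (intro compact_imp_bounded compact_continuous_image compact_cball)
       (auto elim!: continuous_on_subset)
  then obtain \<eta> where \<eta>: "\<And>w. w \<in> cball 0 (1/2) \<Longrightarrow> cmod (deriv f w) \<le> \<eta>"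
    unfolding bounded_iff by blast
  have "cesaro_op \<beta> f \<in> bloch_space \<alpha>"
    using \<delta> assms(1)
    by (intro cesaro_op_bloch_bound(1)[where \<rho> = "1/2", OF _ _ _ _ bloch_norm_nonneg[OF fB] hol f0
          bloch_weight_le_bloch_norm[OF fB] _ _ \<eta>]) auto
  then show ?thesis by (simp add: bloch0_def cesaro_op_0)
qed

lemma cesaro_op_bloch_norm_tendsto_0:
  fixes D :: "nat \<Rightarrow> complex \<Rightarrow> complex"
  assumes "0 < \<alpha>" "\<beta> < \<alpha>" "\<beta> < 1"
    and D: "\<And>n. D n \<in> bloch0 \<alpha>" and M: "\<And>n. bloch_norm \<alpha> (D n) \<le> M"
    and lim: "\<And>\<rho>. \<rho> < 1 \<Longrightarrow> uniform_limit (cball 0 \<rho>) (\<lambda>n. deriv (D n)) (\<lambda>_. 0) sequentially"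
  shows "(\<lambda>n. bloch_norm \<alpha> (cesaro_op \<beta> (D n))) \<longlonglongrightarrow> 0"
proof (rule LIMSEQ_I)
  fix e :: real assume "0 < e"
  have DB: "D n \<in> bloch_space \<alpha>" and hol: "D n holomorphic_on ball 0 1" and D0: "D n 0 = 0" for n
    using D[of n] by (auto simp: bloch0_def bloch_space_def)
  have bd: "(1 - (cmod w)\<^sup>2) powr \<alpha> * cmod (deriv (D n) w) \<le> M" if "w \<in> ball 0 1" for n w
    by (rule order_trans[OF bloch_weight_le_bloch_norm[OF DB that] M])
  have "0 \<le> M" by (rule order_trans[OF bloch_norm_nonneg[OF DB] M])
  obtain \<delta> where \<delta>: "0 < \<delta>" "\<alpha> - 1 \<le> \<delta>" "\<delta> < \<alpha> - max \<beta> 0"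
    using cesaro_exponent_exists[OF assms(1-3)] by blast
  define A where "A = 2 powr (\<alpha> + 1 + \<bar>\<beta>\<bar>) / \<delta> * M"
  \<comment> \<open>Choose \<open>\<rho>\<close> so that the annulus \<open>\<rho> < |z| < 1\<close> contributes less than \<open>e\<close> for all \<open>n\<close>,
    then \<open>N\<close> so that the disc \<open>|z| \<le> \<rho>\<close> does for \<open>n \<ge> N\<close>.\<close>
  have "0 < \<alpha> - \<delta> - max \<beta> 0" using \<delta> by linarith
  then obtain \<rho> where \<rho>: "1/2 \<le> \<rho>" "\<rho> < 1" and tail: "A * (1 - \<rho>) powr (\<alpha> - \<delta> - max \<beta> 0) < e"
    using exists_radius_powr_less[where A = A, OF _ \<open>0 < e\<close>] by blast
  define C where "C = 2 powr \<bar>\<beta>\<bar> * (1 - \<rho>) powr (- max \<beta> 0)"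
  define \<eta> where "\<eta> = e / (2 * C)"
  have "0 < C" using \<rho> by (simp add: C_def)
  then have \<eta>: "0 < \<eta>" "C * \<eta> < e" using \<open>0 < e\<close> by (auto simp: \<eta>_def)
  obtain N where N: "\<forall>n\<ge>N. \<forall>w\<in>cball 0 \<rho>. cmod (deriv (D n) w) < \<eta>"
    using uniform_limitD[OF lim[OF \<rho>(2)] \<eta>(1)] by (auto simp: eventually_sequentially dist_norm)
  have "\<bar>bloch_norm \<alpha> (cesaro_op \<beta> (D n))\<bar> < e" if "N \<le> n" for n
  proof -
    have "cmod (deriv (D n) w) \<le> \<eta>" if "w \<in> cball 0 \<rho>" for w
      using N \<open>N \<le> n\<close> that by (auto intro: less_imp_le)
    note est = cesaro_op_bloch_bound[OF less_imp_le[OF \<open>0 < \<alpha>\<close>] \<delta>(1,2) less_imp_le[OF \<delta>(3)]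
        \<open>0 \<le> M\<close> hol D0 bd \<rho> this]
    have "0 \<le> bloch_norm \<alpha> (cesaro_op \<beta> (D n))" by (rule bloch_norm_nonneg[OF est(1)])
    moreover have "bloch_norm \<alpha> (cesaro_op \<beta> (D n)) < e"
      using est(2) tail \<eta> unfolding A_def C_def by linarith
    ultimately show ?thesis by simp
  qed
  then show "\<exists>N. \<forall>n\<ge>N. norm (bloch_norm \<alpha> (cesaro_op \<beta> (D n)) - 0) < e" by auto
qed

lemma cesaro_op_convergent_subseq:
  fixes F :: "nat \<Rightarrow> complex \<Rightarrow> complex"
  assumes "0 < \<alpha>" "\<beta> < \<alpha>" "\<beta> < 1" and F: "\<And>n. F n \<in> bloch0 \<alpha>"
    and "bdd_above (range (\<lambda>n. bloch_norm \<alpha> (F n)))"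
  shows "\<exists>r g. strict_mono r \<and> g \<in> bloch0 \<alpha> \<and>
           (\<lambda>n. bloch_norm \<alpha> (\<lambda>z. cesaro_op \<beta> (F (r n)) z - g z)) \<longlonglongrightarrow> 0"
proof -
  obtain B where B: "\<And>n. bloch_norm \<alpha> (F n) \<le> B"
    using assms(5) by (auto simp: bdd_above_def)
  obtain r h where r: "strict_mono r" and h: "h \<in> bloch0 \<alpha>" "bloch_norm \<alpha> h \<le> B"
    and unif: "\<And>K. compact K \<Longrightarrow> K \<subseteq> ball 0 1 \<Longrightarrow>
                 uniform_limit K (\<lambda>n. deriv (F (r n))) (deriv h) sequentially"
    using bloch0_bounded_seq_deriv_subseq[where F = F, OF less_imp_le[OF assms(1)] F B] by blast
  have hol: "F n holomorphic_on ball 0 1" and F0: "F n 0 = 0" for n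
    using F[of n] by (auto simp: bloch0_def bloch_space_def)
  have hhol: "h holomorphic_on ball 0 1" and h0: "h 0 = 0"
    using h by (auto simp: bloch0_def bloch_space_def)
  define D where "D n = (\<lambda>z. F (r n) z - h z)" for n
  have "D n \<in> bloch0 \<alpha>" "bloch_norm \<alpha> (D n) \<le> 2 * B" for n
    using bloch0_diff[OF F[of "r n"] h(1)] B[of "r n"] h(2) by (auto simp: D_def)
  moreover have "uniform_limit (cball 0 \<rho>) (\<lambda>n. deriv (D n)) (\<lambda>_. 0) sequentially" if "\<rho> < 1" for \<rho>
  proof -
    have "cball 0 \<rho> \<subseteq> ball 0 1" using that by auto
    then show ?thesis
      unfolding D_def
      by (intro uniform_limit_deriv_diff[where F = "\<lambda>n. F (r n)", OF hol hhol open_ball] unif compact_cball)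
  qed
  ultimately have "(\<lambda>n. bloch_norm \<alpha> (cesaro_op \<beta> (D n))) \<longlonglongrightarrow> 0"
    by (rule cesaro_op_bloch_norm_tendsto_0[OF assms(1-3)])
  moreover have "bloch_norm \<alpha> (\<lambda>z. cesaro_op \<beta> (F (r n)) z - cesaro_op \<beta> h z)
                 = bloch_norm \<alpha> (cesaro_op \<beta> (D n))" for n
    using cesaro_op_linear[OF hol[of "r n"] F0[of "r n"] hhol h0, where a = 1 and b = "-1" and \<beta> = \<beta>]
    by (intro bloch_norm_cong) (simp add: D_def)
  ultimately show ?thesis
    using r cesaro_op_in_bloch0[OF assms(1-3) h(1)]
    by (intro exI[of _ r] exI[of _ "cesaro_op \<beta> h"] conjI) simp_all
qed

theorem theorem3p4:
  fixes \<alpha> \<beta> :: real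
  assumes "\<alpha> > 0"
    and "(\<beta> < \<alpha> \<and> \<alpha> < 1) \<or> (\<beta> < 1 \<and> 1 < \<alpha>) \<or> (\<beta> < \<alpha> \<and> \<alpha> = 1)"
  shows "compact_bloch0_operator \<alpha> (cesaro_op \<beta>)"
proof -
  have \<beta>: "\<beta> < \<alpha>" "\<beta> < 1" using assms by auto
  show ?thesis
    unfolding compact_bloch0_operator_def
    using cesaro_op_in_bloch0[OF assms(1) \<beta>] cesaro_op_convergent_subseq[OF assms(1) \<beta>]
      cesaro_op_linear
    by (auto simp: bloch0_def bloch_space_def)
qed

end
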